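(* Let $\mathcal R$ be a reaction network and let $\mathcal U=\mathcal U_1\cup\mathcal U_2\subseteq\mathcal S$ be a set of non-interacting species with $\mathcal U_1\cap\mathcal U_2=\emptyset$. Assume $\mathcal U_1$ is eliminable in $\mathcal R$ with respect to some $\mathcal F_1\subseteq\mathcal R_{\mathcal U_1}$, and that $\mathcal U_2$ is eliminable in the reduced network $\widetilde{\mathcal R}=\mathcal R^*_{\mathcal U_1,\mathcal F_1}$ with respect to $\mathcal F_2=\widetilde{\mathcal R}_{\mathcal U_2}$. Then $\mathcal U$ is eliminable in $\mathcal R$ with respect to $\mathcal F=\mathcal F_1\cup\mathcal R_{\mathcal U_2}$.
   Context: Species $S_1,\dots,S_n$ are the unit vectors of $\mathbb{N}_0^n$ and $\mathcal S=\{S_1,\dots,S_n\}$; for $x\in\mathbb{N}_0^n$, $\mathrm{supp}(x)=\{S_k: x^k>0\}$. A reaction network (RN) is a (possibly infinite) subset $\mathcal R\subseteq\mathbb{N}_0^n\times\mathbb{N}_0^n$ containing no $(y,y')$ with $y=y'$; elements $(y,y')$ are reactions $y\to y'$ with reactant $y$ and product $y'$. For $r_1=(y_1,y_1'),\ r_2=(y_2,y_2')$ define $r_1\oplus r_2=(y_1+0\vee(y_2-y_1'),\ y_2'+0\vee(y_1'-y_2))$ ($\vee$ componentwise maximum); it is associative. $\mathrm{cl}(A)$ is the set of all finite $\oplus$-sums of elements of $A$, including $(0,0)$. $(y_1,y_1')\sim(0,0)$ means $y_1=y_1'$. For $\mathcal U\subseteq\mathcal S$ and a set $B\subseteq\mathbb{N}_0^n\times\mathbb{N}_0^n$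 write $B_{\mathcal U}=\{(y,y')\in B:\mathrm{supp}(y)\cap\mathcal U\neq\emptyset\}$ and $B_{\mathcal U}'=\{(y,y')\in B:\mathrm{supp}(y')\cap\mathcal U\neq\emptyset\}$. For an RN $\mathcal R$ and $\mathcal U$, set $\overline{\mathcal R}=\mathrm{cl}(\mathcal R)$, $\mathcal R_0=\mathcal R\setminus(\mathcal R_{\mathcal U}\cup\mathcal R_{\mathcal U}')$ and $\overline{\mathcal R}_0=\overline{\mathcal R}\setminus(\overline{\mathcal R}_{\mathcal U}\cup\overline{\mathcal R}_{\mathcal U}')$. $\mathcal U$ is eliminable in $\mathcal R$ with respect to $\mathcal F\subseteq\mathcal R_{\mathcal U}$ if for every $r_0\in\mathcal R_{\mathcal U}'$ and every $r_1\in\mathrm{cl}(\mathcal F)$ with $r_0\oplus r_1\notin\overline{\mathcal R}_{\mathcal U}$ there exists $r_2\in\mathrm{cl}(\mathcal F)$ with $r_0\oplus r_1\oplus r_2\in\overline{\mathcal R}_0$. In that case the reduced RN is $\mathcal R^*_{\mathcal U,\mathcal F}=\mathcal R_0\cup\mathcal R_{\mathcal U,\mathcal F}$, where $\mathcal R_{\mathcal U,\mathcal F}=\{r_0\oplus r_1\in\overline{\mathcal R}_0: r_0\in\mathcal R_{\mathcal U}',\ r_1\in\mathrm{cl}(\mathcal F)\}\setminus\{r: r\sim(0,0)\}$. $\mathcal U$ consists of non-interacting species (in $\mathcal R$) if for every reaction $y\to y'\in\mathcal R$, $\sum_{S_i\in\mathcal U}y^i\le1$ and $\sum_{S_i\in\mathcal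 U}(y')^i\le1$. *)

theory Defs
  imports Main
begin

text \<open>Species are indexed by a finite type 'n (so n = CARD('n)); a complex is a
vector in N_0^n, represented as a function 'n => nat.  A reaction is a pair
(reactant, product).\<close>

type_synonym 'n complex = "'n \<Rightarrow> nat"
type_synonym 'n reaction = "'n complex \<times> 'n complex"

definition supp :: "'n complex \<Rightarrow> 'n set" where
  "supp x = {k. x k > 0}"

definition is_RN :: "'n reaction set \<Rightarrow> bool" where
  "is_RN R \<longleftrightarrow> (\<forall>(y, y') \<in> R. y \<noteq> y')"

text \<open>r1 (+) r2 = (y1 + 0 v (y2 - y1'), y2' + 0 v (y1' - y2)); truncated nat subtraction
is exactly 0 v (a - b).\<close>
definition oplus :: "'n reaction \<Rightarrow> 'n reaction \<Rightarrow> 'n reaction" where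
  "oplus r1 r2 = (\<lambda>k. fst r1 k + (fst r2 k - snd r1 k), \<lambda>k. snd r2 k + (snd r1 k - fst r2 k))"

definition zero_reaction :: "'n reaction" where
  "zero_reaction = ((\<lambda>_. 0), (\<lambda>_. 0))"

definition cl :: "'n reaction set \<Rightarrow> 'n reaction set" where
  "cl A = {foldl oplus zero_reaction xs | xs. set xs \<subseteq> A}"

definition sim0 :: "'n reaction \<Rightarrow> bool" where
  "sim0 r \<longleftrightarrow> fst r = snd r"

definition reac_U :: "'n reaction set \<Rightarrow> 'n set \<Rightarrow> 'n reaction set" where
  "reac_U B U = {(y, y') \<in> B. supp y \<inter> U \<noteq> {}}"

definition prod_U :: "'n reaction set \<Rightarrow> 'n set \<Rightarrow> 'n reaction set" where
  "prod_U B U = {(y, y') \<in> B. supp y' \<inter> U \<noteq> {}}"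

definition zero_part :: "'n reaction set \<Rightarrow> 'n set \<Rightarrow> 'n reaction set" where
  "zero_part B U = B - (reac_U B U \<union> prod_U B U)"

text \<open>U is eliminable in R with respect to F (F \<subseteq> R_U is a separate hypothesis).\<close>
definition eliminable :: "'n reaction set \<Rightarrow> 'n set \<Rightarrow> 'n reaction set \<Rightarrow> bool" where
  "eliminable R U F \<longleftrightarrow>
     (\<forall>r0 \<in> prod_U R U. \<forall>r1 \<in> cl F.
        oplus r0 r1 \<notin> reac_U (cl R) U \<longrightarrow>
        (\<exists>r2 \<in> cl F. oplus (oplus r0 r1) r2 \<in> zero_part (cl R) U))"

definition reduced :: "'n reaction set \<Rightarrow> 'n set \<Rightarrow> 'n reaction set \<Rightarrow> 'n reaction set" where
  "reduced R U F = zero_part R U \<union>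
     ({r. \<exists>r0 \<in> prod_U R U. \<exists>r1 \<in> cl F. r = oplus r0 r1 \<and> r \<in> zero_part (cl R) U}
      - {r. sim0 r})"

definition non_interacting :: "'n reaction set \<Rightarrow> 'n set \<Rightarrow> bool" where
  "non_interacting R U \<longleftrightarrow>
     (\<forall>(y, y') \<in> R. (\<Sum>i\<in>U. y i) \<le> 1 \<and> (\<Sum>i\<in>U. y' i) \<le> 1)"

end

(* Follow r0 (+) r1 one reaction at a time.  By non-interaction every partial sum carries at
   most one unit of a species of U in its product.  The invariant is that this unit is pending:
   it sits at the end of a partial path that one of the two eliminability hypotheses can
   complete -- a path of F1 for a unit in U1, a path of the reduced network for a unit in U2.
   The two kinds of path hand over to each other because a U1-path that has left U1 again is,
   unless trivial, a reaction of the reduced network.  At the end, eliminability of U1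
   completes a unit in U1, and the U2-unit this may leave is completed in the reduced
   network. *)

theory Submission
  imports Defs
begin

abbreviation vanishes_on :: "'a set \<Rightarrow> ('a \<Rightarrow> nat) \<Rightarrow> bool" where
  "vanishes_on V x \<equiv> \<forall>k\<in>V. x k = 0"

abbreviation unit_on :: "'a set \<Rightarrow> ('a \<Rightarrow> nat) \<Rightarrow> 'a \<Rightarrow> bool" where
  "unit_on V x u \<equiv> \<forall>k\<in>V. x k = (if k = u then 1 else 0)"

lemma fst_oplus [simp]: "fst (oplus a b) k = fst a k + (fst b k - snd a k)"
  by (simp add: oplus_def)

lemma snd_oplus [simp]: "snd (oplus a b) k = snd b k + (snd a k - fst b k)"
  by (simp add: oplus_def)

lemma oplus_matched:
  assumes "fst b k = snd a k"
  shows "fst (oplus a b) k = fst a k" and "snd (oplus a b) k = snd b k"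
  using assms by simp_all

lemma reaction_eqI: "(\<And>k. fst a k = fst b k) \<Longrightarrow> (\<And>k. snd a k = snd b k) \<Longrightarrow> a = (b :: 'n reaction)"
  by (metis ext prod.expand)

lemma oplus_assoc: "oplus (oplus a b) c = oplus a (oplus b c)"
  by (rule reaction_eqI) simp_all

lemma fst_zero_reaction [simp]: "fst zero_reaction k = 0"
  and snd_zero_reaction [simp]: "snd zero_reaction k = 0"
  by (simp_all add: zero_reaction_def)

lemma oplus_zero_right [simp]: "oplus r zero_reaction = r"
  by (rule reaction_eqI) simp_all

lemma oplus_zero_left [simp]: "oplus zero_reaction r = r"
  by (rule reaction_eqI) simp_all

lemma foldl_oplus_shift: "foldl oplus (oplus a b) xs = oplus a (foldl oplus b xs)"
  by (induction xs arbitrary: b) (simp_all add: oplus_assoc)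

lemma zero_reaction_in_cl [simp]: "zero_reaction \<in> cl A"
  unfolding cl_def by (rule CollectI, rule exI[of _ "[]"]) simp

lemma cl_single: "a \<in> A \<Longrightarrow> a \<in> cl A"
  unfolding cl_def by (rule CollectI, rule exI[of _ "[a]"]) simp

lemma cl_oplus:
  assumes "a \<in> cl A" "b \<in> cl A"
  shows "oplus a b \<in> cl A"
proof -
  obtain xs ys where "a = foldl oplus zero_reaction xs" "b = foldl oplus zero_reaction ys"
    "set xs \<subseteq> A" "set ys \<subseteq> A"
    using assms unfolding cl_def by blast
  moreover have "foldl oplus (foldl oplus zero_reaction xs) ys =
      oplus (foldl oplus zero_reaction xs) (foldl oplus zero_reaction ys)"
    using foldl_oplus_shift[of "foldl oplus zero_reaction xs" zero_reaction ys] by simp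
  ultimately show ?thesis
    unfolding cl_def by (intro CollectI exI[of _ "xs @ ys"]) simp
qed

lemma cl_induct [consumes 1, case_names zero oplus]:
  assumes "r \<in> cl A" "P zero_reaction" "\<And>a b. P a \<Longrightarrow> b \<in> A \<Longrightarrow> P (oplus a b)"
  shows "P r"
proof -
  obtain xs where xs: "r = foldl oplus zero_reaction xs" "set xs \<subseteq> A"
    using assms(1) unfolding cl_def by blast
  have "set xs \<subseteq> A \<Longrightarrow> P (foldl oplus zero_reaction xs)"
    by (induction xs rule: rev_induct) (auto intro: assms(2,3))
  then show ?thesis using xs by simp
qed

lemma cl_subset_cl:
  assumes "A \<subseteq> cl B"
  shows "cl A \<subseteq> cl B"
proof
  fix r assume "r \<in> cl A"
  then show "r \<in> cl B"
    by (induction rule: cl_induct) (use assms in \<open>auto intro: cl_oplus\<close>)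
qed

lemma cl_mono: "A \<subseteq> B \<Longrightarrow> cl A \<subseteq> cl B"
  by (rule cl_subset_cl) (auto intro: cl_single)

lemma cl_vanishing:
  assumes "r \<in> cl A" "\<And>a. a \<in> A \<Longrightarrow> fst a k = 0 \<and> snd a k = 0"
  shows "fst r k = 0 \<and> snd r k = 0"
  using assms by (induction rule: cl_induct) auto

lemma cl_fst_vanishing:
  assumes "r \<in> cl A" "\<And>a. a \<in> A \<Longrightarrow> fst a k = 0"
  shows "fst r k = 0"
  using assms by (induction rule: cl_induct) auto

lemma reac_U_iff: "r \<in> reac_U B V \<longleftrightarrow> r \<in> B \<and> (\<exists>k\<in>V. fst r k > 0)"
  by (cases r) (auto simp: reac_U_def supp_def)

lemma prod_U_iff: "r \<in> prod_U B V \<longleftrightarrow> r \<in> B \<and> (\<exists>k\<in>V. snd r k > 0)"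
  by (cases r) (auto simp: prod_U_def supp_def)

lemma zero_part_iff: "r \<in> zero_part B V \<longleftrightarrow> r \<in> B \<and> vanishes_on V (fst r) \<and> vanishes_on V (snd r)"
  by (auto simp: zero_part_def reac_U_iff prod_U_iff)

lemma sum_le_one_nat_cases:
  fixes g :: "'a \<Rightarrow> nat"
  assumes "finite V" "sum g V \<le> 1"
  shows "vanishes_on V g \<or> (\<exists>u\<in>V. unit_on V g u)"
proof (cases "vanishes_on V g")
  case False
  then obtain u where u: "u \<in> V" "g u > 0" by auto
  have "sum g V = g u + sum g (V - {u})" using assms(1) u(1) by (simp add: sum.remove)
  then have "g u = 1" "sum g (V - {u}) = 0" using assms(2) u(2) by auto
  then have "unit_on V g u" using assms(1) by (simp add: sum_eq_0_iff)
  then show ?thesis using u(1) by blast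
qed simp

lemma unit_on_positive:
  assumes "vanishes_on V x \<or> (\<exists>u\<in>V. unit_on V x u)" "k \<in> V" "x k > 0"
  shows "unit_on V x k"
proof -
  obtain u where u: "unit_on V x u" using assms by auto
  then have "x k = (if k = u then 1 else 0)" using assms(2) by (rule bspec)
  then have "k = u" using assms(3) by (simp split: if_splits)
  then show ?thesis using u by simp
qed

lemma eliminable_completion:
  assumes "eliminable R V F" "q0 \<in> prod_U R V" "q1 \<in> cl F"
    and "vanishes_on V (fst (oplus q0 q1))" "unit_on V (snd (oplus q0 q1)) u"
  obtains r where "r \<in> cl F" "unit_on V (fst r) u" "vanishes_on V (snd r)"
proof -
  have "oplus q0 q1 \<notin> reac_U (cl R) V" using assms(4) by (auto simp: reac_U_iff)
  then obtain r where r: "r \<in> cl F" "oplus (oplus q0 q1) r \<in> zero_part (cl R) V"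
    using assms(1-3) unfolding eliminable_def by blast
  have pointwise: "fst r k = (if k = u then 1 else 0) \<and> snd r k = 0" if "k \<in> V" for k
  proof -
    have "fst (oplus q0 q1) k + (fst r k - snd (oplus q0 q1) k) = 0"
      "snd r k + (snd (oplus q0 q1) k - fst r k) = 0"
      using r(2) that unfolding zero_part_iff fst_oplus[of "oplus q0 q1" r] snd_oplus[of "oplus q0 q1" r]
      by blast+
    moreover have "snd (oplus q0 q1) k = (if k = u then 1 else 0)" using assms(5) that by blast
    ultimately show ?thesis by (simp split: if_splits)
  qed
  show thesis
  proof (rule that[OF r(1)])
    show "unit_on V (fst r) u" using pointwise by simp
    show "vanishes_on V (snd r)" using pointwise by simp
  qed
qed

locale two_step_elimination =
  fixes R F1 :: "('n::finite) reaction set" and U1 U2 :: "'n set"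
  assumes non_interacting: "non_interacting R (U1 \<union> U2)"
    and disjoint: "U1 \<inter> U2 = {}"
    and F1_reac: "F1 \<subseteq> reac_U R U1"
    and eliminable1: "eliminable R U1 F1"
    and eliminable2: "eliminable (reduced R U1 F1) U2 (reac_U (reduced R U1 F1) U2)"
begin

abbreviation "U \<equiv> U1 \<union> U2"
abbreviation "R_red \<equiv> reduced R U1 F1"
abbreviation "F \<equiv> F1 \<union> reac_U R U2"

lemma reactant_cases:
  assumes "r \<in> R"
  shows "vanishes_on U (fst r) \<or> (\<exists>u\<in>U. unit_on U (fst r) u)"
proof -
  have "sum (fst r) U \<le> 1"
    using non_interacting assms unfolding non_interacting_def by (cases r) auto
  then show ?thesis by (intro sum_le_one_nat_cases) simp_all
qed

lemma product_cases:
  assumes "r \<in> R"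
  shows "vanishes_on U (snd r) \<or> (\<exists>u\<in>U. unit_on U (snd r) u)"
proof -
  have "sum (snd r) U \<le> 1"
    using non_interacting assms unfolding non_interacting_def by (cases r) auto
  then show ?thesis by (intro sum_le_one_nat_cases) simp_all
qed

lemma reactant_unit: "r \<in> R \<Longrightarrow> k \<in> U \<Longrightarrow> fst r k > 0 \<Longrightarrow> unit_on U (fst r) k"
  by (rule unit_on_positive[OF reactant_cases])

lemma product_unit: "r \<in> R \<Longrightarrow> k \<in> U \<Longrightarrow> snd r k > 0 \<Longrightarrow> unit_on U (snd r) k"
  by (rule unit_on_positive[OF product_cases])

lemma F_subset: "F \<subseteq> R"
  using F1_reac by (auto simp: reac_U_iff)

lemma F_reactant:
  assumes "f \<in> F"
  shows "\<exists>a\<in>U. unit_on U (fst f) a"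
proof -
  have "f \<in> reac_U R U1 \<or> f \<in> reac_U R U2" using assms F1_reac by blast
  then obtain a where "a \<in> U" "fst f a > 0" "f \<in> R" unfolding reac_U_iff by blast
  then have "unit_on U (fst f) a" by (intro reactant_unit)
  with \<open>a \<in> U\<close> show ?thesis by (rule bexI[rotated])
qed

lemma F1_reactant_U2:
  assumes "f \<in> F1" "k \<in> U2"
  shows "fst f k = 0"
proof -
  have "f \<in> reac_U R U1" using assms(1) F1_reac by blast
  then obtain a where "a \<in> U1" "fst f a > 0" "f \<in> R" unfolding reac_U_iff by blast
  then have "unit_on U (fst f) a" by (intro reactant_unit) auto
  moreover have "a \<noteq> k" using \<open>a \<in> U1\<close> assms(2) disjoint by blast
  ultimately show ?thesis using assms(2) by simp
qed

lemma cl_F1_reactant_U2: "r \<in> cl F1 \<Longrightarrow> k \<in> U2 \<Longrightarrow> fst r k = 0"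
  by (rule cl_fst_vanishing[OF _ F1_reactant_U2])

lemma cl_F1_subset: "cl F1 \<subseteq> cl R"
  using F_subset by (intro cl_mono) blast

lemma cl_F_subset: "cl F \<subseteq> cl R"
  using F_subset by (rule cl_mono)

lemma R_red_U1:
  assumes "r \<in> R_red" "k \<in> U1"
  shows "fst r k = 0 \<and> snd r k = 0"
proof -
  have "r \<in> zero_part R U1 \<or> r \<in> zero_part (cl R) U1"
    using assms(1) unfolding reduced_def by blast
  then show ?thesis using assms(2) unfolding zero_part_iff by blast
qed

lemma cl_R_red_U1: "r \<in> cl R_red \<Longrightarrow> k \<in> U1 \<Longrightarrow> fst r k = 0 \<and> snd r k = 0"
  by (rule cl_vanishing[OF _ R_red_U1])

lemma zero_part_subset_R_red: "zero_part R U1 \<subseteq> R_red"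
  unfolding reduced_def by blast

lemma reac_U2_R_red_subset: "reac_U R_red U2 \<subseteq> cl F"
proof
  fix x assume "x \<in> reac_U R_red U2"
  then obtain k where k: "k \<in> U2" "fst x k > 0" "x \<in> R_red" by (auto simp: reac_U_iff)
  show "x \<in> cl F"
  proof (cases "x \<in> zero_part R U1")
    case True
    then show ?thesis using k by (auto simp: zero_part_iff reac_U_iff intro: cl_single)
  next
    case False
    then obtain q0 q1 where q: "q0 \<in> prod_U R U1" "q1 \<in> cl F1" "x = oplus q0 q1"
      using k(3) unfolding reduced_def by blast
    have "fst q0 k > 0" using k q cl_F1_reactant_U2 by simp
    then have "q0 \<in> cl F" using q(1) k(1) by (auto simp: reac_U_iff prod_U_iff intro: cl_single)
    moreover have "q1 \<in> cl F" using q(2) cl_mono[of F1 F] by blast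
    ultimately show ?thesis using q(3) cl_oplus by blast
  qed
qed

text \<open>A unit of u is pending if it ends a partial path that eliminable1 (u \<in> U1) or
eliminable2 (u \<in> U2) can complete; the U2-reactant clause of pending1 records the pending
U2-path that the U1-path is chained to.\<close>

definition pending2 :: "'n \<Rightarrow> bool" where
  "pending2 v \<longleftrightarrow> (\<exists>q0\<in>prod_U R_red U2. \<exists>q1\<in>cl (reac_U R_red U2).
     vanishes_on U2 (fst (oplus q0 q1)) \<and> unit_on U2 (snd (oplus q0 q1)) v)"

definition pending1 :: "'n \<Rightarrow> bool" where
  "pending1 u \<longleftrightarrow> (\<exists>q0\<in>prod_U R U1. \<exists>q1\<in>cl F1.
     vanishes_on U1 (fst (oplus q0 q1)) \<and> unit_on U (snd (oplus q0 q1)) u \<and>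
     (vanishes_on U2 (fst (oplus q0 q1)) \<or>
      (\<exists>w\<in>U2. unit_on U2 (fst (oplus q0 q1)) w \<and> pending2 w)))"

definition pending :: "'n \<Rightarrow> bool" where
  "pending u \<longleftrightarrow> (if u \<in> U1 then pending1 u else pending2 u)"

definition tracked :: "'n reaction \<Rightarrow> bool" where
  "tracked s \<longleftrightarrow> vanishes_on U (snd s) \<or> (\<exists>u\<in>U. unit_on U (snd s) u \<and> pending u)"

lemma pending2I:
  assumes "q0 \<in> prod_U R_red U2" "q1 \<in> cl (reac_U R_red U2)"
    "vanishes_on U2 (fst (oplus q0 q1))" "unit_on U2 (snd (oplus q0 q1)) v"
  shows "pending2 v"
  unfolding pending2_def using assms by (intro bexI[of _ q0] bexI[of _ q1] conjI)

lemma pending1I: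
  assumes "q0 \<in> prod_U R U1" "q1 \<in> cl F1"
    "vanishes_on U1 (fst (oplus q0 q1))" "unit_on U (snd (oplus q0 q1)) u"
    "vanishes_on U2 (fst (oplus q0 q1)) \<or> (\<exists>w\<in>U2. unit_on U2 (fst (oplus q0 q1)) w \<and> pending2 w)"
  shows "pending1 u"
  unfolding pending1_def using assms by (intro bexI[of _ q0] bexI[of _ q1] conjI)

lemma pending2_step:
  assumes "pending2 v" "f \<in> reac_U R_red U2" "unit_on U2 (fst f) v" "unit_on U2 (snd f) b"
  shows "pending2 b"
proof -
  obtain q0 q1 where q: "q0 \<in> prod_U R_red U2" "q1 \<in> cl (reac_U R_red U2)"
    "vanishes_on U2 (fst (oplus q0 q1))" "unit_on U2 (snd (oplus q0 q1)) v"
    using assms(1) unfolding pending2_def by blast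
  have "oplus q1 f \<in> cl (reac_U R_red U2)" using q(2) assms(2) by (blast intro: cl_oplus cl_single)
  moreover have "vanishes_on U2 (fst (oplus (oplus q0 q1) f))"
    and "unit_on U2 (snd (oplus (oplus q0 q1) f)) b"
    using q(3,4) assms(3,4) by simp_all
  ultimately show ?thesis using q(1) by (intro pending2I[of q0 "oplus q1 f"]) (simp_all only: oplus_assoc)
qed

lemma pending_step_from_U2:
  assumes "a \<in> U2" "pending2 a" "f \<in> R"
    and "unit_on U (fst f) a" "unit_on U (snd f) b" "b \<in> U"
  shows "pending b"
proof -
  have "a \<notin> U1" using assms(1) disjoint by blast
  then have f_U1: "vanishes_on U1 (fst f)" using assms(4) by auto
  show ?thesis
  proof (cases "b \<in> U1")
    case True
    have "snd f b > 0" using assms(5,6) by simp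
    then have "f \<in> prod_U R U1" using assms(3) True by (auto simp: prod_U_iff)
    moreover have "\<exists>w\<in>U2. unit_on U2 (fst (oplus f zero_reaction)) w \<and> pending2 w"
      using assms(1,2,4) by (intro bexI[of _ a] conjI) simp_all
    ultimately have "pending1 b"
      using assms(5) f_U1 by (intro pending1I[of f zero_reaction]) simp_all
    then show ?thesis using True by (simp add: pending_def)
  next
    case False
    then have "vanishes_on U1 (snd f)" using assms(5) by auto
    then have "f \<in> zero_part R U1" using assms(3) f_U1 by (simp add: zero_part_iff)
    then have "f \<in> R_red" using zero_part_subset_R_red by blast
    moreover have "fst f a > 0" using assms(1,4) by simp
    ultimately have "f \<in> reac_U R_red U2" using assms(1) unfolding reac_U_iff by blast
    moreover have "unit_on U2 (fst f) a" "unit_on U2 (snd f) b" using assms(4,5) by simp_all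
    ultimately have "pending2 b" using assms(2) pending2_step by blast
    then show ?thesis using False by (simp add: pending_def)
  qed
qed

lemma pending2_from_closed_U1_path:
  assumes "q0 \<in> prod_U R U1" "q1 \<in> cl F1"
    and "vanishes_on U1 (fst (oplus q0 q1))" "vanishes_on U1 (snd (oplus q0 q1))"
    and "unit_on U2 (snd (oplus q0 q1)) b" "b \<in> U2"
    and "vanishes_on U2 (fst (oplus q0 q1)) \<or>
      (\<exists>w\<in>U2. unit_on U2 (fst (oplus q0 q1)) w \<and> pending2 w)"
  shows "pending2 b"
proof -
  define q where "q = oplus q0 q1"
  note q_props = assms(3-7)[folded q_def]
  have "q0 \<in> cl R" using assms(1) by (auto simp: prod_U_iff intro: cl_single)
  then have "q \<in> cl R" unfolding q_def using assms(2) cl_F1_subset by (blast intro: cl_oplus)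
  then have "q \<in> zero_part (cl R) U1" using q_props(1,2) by (simp add: zero_part_iff)
  \<comment> \<open>the non-trivial U1-free sums of U1-paths are the new reactions of the reduced network\<close>
  then have in_R_red: "q \<in> R_red" if "\<not> sim0 q"
    using assms(1,2) that unfolding reduced_def q_def by blast
  have snd_b: "snd q b = 1" using q_props(3) assms(6) by simp
  from q_props(5) show ?thesis
  proof
    assume vanish: "vanishes_on U2 (fst q)"
    then have "\<not> sim0 q" using snd_b assms(6) by (auto simp: sim0_def)
    moreover have "snd q b > 0" using snd_b by simp
    ultimately have "q \<in> prod_U R_red U2" using in_R_red assms(6) unfolding prod_U_iff by blast
    then show ?thesis using vanish q_props(3) by (intro pending2I[of q zero_reaction]) simp_all
  next
    assume "\<exists>w\<in>U2. unit_on U2 (fst q) w \<and> pending2 w"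
    then obtain w where w: "w \<in> U2" "unit_on U2 (fst q) w" "pending2 w" by blast
    show ?thesis
    proof (cases "sim0 q")
      case True
      then have "snd q w = 1" using w(1,2) by (simp add: sim0_def)
      then have "w = b" using w(1) q_props(3) by (simp split: if_splits)
      then show ?thesis using w(3) by simp
    next
      case False
      have "fst q w > 0" using w(1,2) by simp
      then have "q \<in> reac_U R_red U2" using in_R_red[OF False] w(1) unfolding reac_U_iff by blast
      then show ?thesis using pending2_step w(2,3) q_props(3) by blast
    qed
  qed
qed

lemma pending_step_from_U1:
  assumes "a \<in> U1" "pending1 a" "f \<in> F1"
    and "unit_on U (fst f) a" "unit_on U (snd f) b" "b \<in> U"
  shows "pending b"
proof -
  obtain q0 q1 where q: "q0 \<in> prod_U R U1" "q1 \<in> cl F1"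
    "vanishes_on U1 (fst (oplus q0 q1))" "unit_on U (snd (oplus q0 q1)) a"
    and U2_reactant: "vanishes_on U2 (fst (oplus q0 q1)) \<or>
      (\<exists>w\<in>U2. unit_on U2 (fst (oplus q0 q1)) w \<and> pending2 w)"
    using assms(2) unfolding pending1_def by blast
  have q1f: "oplus q1 f \<in> cl F1" using q(2) assms(3) by (blast intro: cl_oplus cl_single)
  have "fst f k = snd (oplus q0 q1) k" if "k \<in> U" for k
    using q(4) assms(4) that by (simp del: fst_oplus snd_oplus)
  then have fst_ext: "fst (oplus q0 (oplus q1 f)) k = fst (oplus q0 q1) k"
    and snd_ext: "snd (oplus q0 (oplus q1 f)) k = snd f k" if "k \<in> U" for k
    unfolding oplus_assoc[symmetric] using that by (simp_all add: oplus_matched)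
  have U1_reactant: "vanishes_on U1 (fst (oplus q0 (oplus q1 f)))"
    using q(3) fst_ext by (simp del: fst_oplus)
  have U2_reactant': "vanishes_on U2 (fst (oplus q0 (oplus q1 f))) \<or>
      (\<exists>w\<in>U2. unit_on U2 (fst (oplus q0 (oplus q1 f))) w \<and> pending2 w)"
    using U2_reactant fst_ext by (simp del: fst_oplus)
  show ?thesis
  proof (cases "b \<in> U1")
    case True
    have "unit_on U (snd (oplus q0 (oplus q1 f))) b"
      using assms(5) snd_ext by (simp del: snd_oplus)
    then have "pending1 b" by (rule pending1I[OF q(1) q1f U1_reactant _ U2_reactant'])
    then show ?thesis using True by (simp add: pending_def)
  next
    case False
    then have "b \<in> U2" using assms(6) by blast
    have "vanishes_on U1 (snd (oplus q0 (oplus q1 f)))"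
      using assms(5) snd_ext False by (auto simp del: snd_oplus)
    moreover have "unit_on U2 (snd (oplus q0 (oplus q1 f))) b"
      using assms(5) snd_ext by (simp del: snd_oplus)
    ultimately have "pending2 b"
      by (rule pending2_from_closed_U1_path[OF q(1) q1f U1_reactant _ _ \<open>b \<in> U2\<close> U2_reactant'])
    then show ?thesis using False by (simp add: pending_def)
  qed
qed

lemma pending_step:
  assumes "pending a" "a \<in> U" "f \<in> F"
    and "unit_on U (fst f) a" "unit_on U (snd f) b" "b \<in> U"
  shows "pending b"
proof (cases "a \<in> U1")
  case True
  have "f \<in> F1"
  proof (rule ccontr)
    assume "f \<notin> F1"
    then have "f \<in> reac_U R U2" using assms(3) by blast
    then obtain k where k: "k \<in> U2" "fst f k > 0" unfolding reac_U_iff by blast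
    moreover have "k \<noteq> a" using True k(1) disjoint by blast
    ultimately show False using assms(4) by simp
  qed
  moreover have "pending1 a" using assms(1) True by (simp add: pending_def)
  ultimately show ?thesis using pending_step_from_U1[OF True _ _ assms(4-6)] by blast
next
  case False
  then have "a \<in> U2" "pending2 a" using assms(1,2) by (simp_all add: pending_def)
  moreover have "f \<in> R" using assms(3) F_subset by blast
  ultimately show ?thesis using pending_step_from_U2[OF _ _ _ assms(4-6)] by blast
qed

lemma tracked_unitI: "pending u \<Longrightarrow> u \<in> U \<Longrightarrow> unit_on U (snd s) u \<Longrightarrow> tracked s"
  unfolding tracked_def by (intro disjI2 bexI[of _ u] conjI)

lemma tracked_start:
  assumes "r \<in> prod_U R U" "vanishes_on U (fst r)"
  shows "tracked r"
proof -
  obtain b where b: "b \<in> U" "snd r b > 0" "r \<in> R" using assms(1) unfolding prod_U_iff by blast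
  then have unit: "unit_on U (snd r) b" by (intro product_unit)
  have "pending b"
  proof (cases "b \<in> U1")
    case True
    then have "r \<in> prod_U R U1" using b(2,3) unfolding prod_U_iff by blast
    then have "pending1 b" using assms(2) unit by (intro pending1I[of r zero_reaction]) simp_all
    then show ?thesis using True by (simp add: pending_def)
  next
    case False
    then have "vanishes_on U1 (snd r)" using unit by auto
    then have "r \<in> zero_part R U1" using assms(2) b(3) by (simp add: zero_part_iff)
    then have "r \<in> R_red" using zero_part_subset_R_red by blast
    then have "r \<in> prod_U R_red U2" using b False unfolding prod_U_iff by blast
    then have "pending2 b" using assms(2) unit by (intro pending2I[of r zero_reaction]) simp_all
    then show ?thesis using False by (simp add: pending_def)
  qed
  then show ?thesis using b(1) unit by (rule tracked_unitI)
qed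

lemma tracked_step:
  assumes "tracked s" "f \<in> F" "vanishes_on U (fst (oplus s f))"
  shows "tracked (oplus s f)"
proof -
  obtain a where a: "a \<in> U" "unit_on U (fst f) a" using F_reactant[OF assms(2)] by blast
  have "fst (oplus s f) a = 0" by (rule bspec[OF assms(3) a(1)])
  moreover have "fst f a = 1" using a by simp
  ultimately have "snd s a > 0" by simp
  then have "\<not> vanishes_on U (snd s)" using a(1) by auto
  then obtain u where u: "u \<in> U" "unit_on U (snd s) u" "pending u"
    using assms(1) unfolding tracked_def by blast
  have "a = u" using \<open>snd s a > 0\<close> u(2) a(1) by (simp split: if_splits)
  then have snd_eq: "snd (oplus s f) k = snd f k" if "k \<in> U" for k
    using a(2) u(2) that by (simp add: oplus_matched)
  have "f \<in> R" using assms(2) F_subset by blast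
  from product_cases[OF this] show ?thesis
  proof
    assume "vanishes_on U (snd f)"
    then show ?thesis using snd_eq unfolding tracked_def by (simp del: snd_oplus)
  next
    assume "\<exists>b\<in>U. unit_on U (snd f) b"
    then obtain b where b: "b \<in> U" "unit_on U (snd f) b" by blast
    then have "pending b" using pending_step[OF u(3) u(1) assms(2)] a(2) \<open>a = u\<close> by blast
    moreover have "unit_on U (snd (oplus s f)) b" using b(2) snd_eq by (simp del: snd_oplus)
    ultimately show ?thesis using b(1) by (intro tracked_unitI)
  qed
qed

lemma tracked_oplus_cl:
  assumes "t \<in> cl F" "tracked s"
  shows "vanishes_on U (fst (oplus s t)) \<Longrightarrow> tracked (oplus s t)"
  using assms(1)
proof (induction rule: cl_induct)
  case zero
  then show ?case using assms(2) by simp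
next
  case (oplus t f)
  have vanish: "vanishes_on U (fst (oplus (oplus s t) f))"
    using oplus.prems by (simp only: oplus_assoc)
  then have "vanishes_on U (fst (oplus s t))" by simp
  then have "tracked (oplus (oplus s t) f)"
    using tracked_step[OF _ oplus.hyps vanish] oplus.IH by blast
  then show ?case by (simp only: oplus_assoc)
qed

lemma completion_from_U2:
  assumes "v \<in> U2" "pending2 v" "s \<in> cl R" "vanishes_on U (fst s)" "unit_on U (snd s) v"
  shows "\<exists>r\<in>cl F. oplus s r \<in> zero_part (cl R) U"
proof -
  obtain q0 q1 where "q0 \<in> prod_U R_red U2" "q1 \<in> cl (reac_U R_red U2)"
    "vanishes_on U2 (fst (oplus q0 q1))" "unit_on U2 (snd (oplus q0 q1)) v"
    using assms(2) unfolding pending2_def by blast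
  then obtain r where r: "r \<in> cl (reac_U R_red U2)" "unit_on U2 (fst r) v" "vanishes_on U2 (snd r)"
    by (rule eliminable_completion[OF eliminable2])
  have "cl (reac_U R_red U2) \<subseteq> cl R_red" by (rule cl_mono) (auto simp: reac_U_iff)
  then have r_U1: "fst r k = 0 \<and> snd r k = 0" if "k \<in> U1" for k
    using cl_R_red_U1 r(1) that by blast
  have "r \<in> cl F" using r(1) cl_subset_cl[OF reac_U2_R_red_subset] by blast
  moreover have "oplus s r \<in> cl R" using assms(3) calculation cl_F_subset by (blast intro: cl_oplus)
  moreover have "fst (oplus s r) k = 0 \<and> snd (oplus s r) k = 0" if "k \<in> U" for k
  proof (cases "k \<in> U1")
    case True
    then have "k \<noteq> v" using assms(1) disjoint by blast
    then show ?thesis using True assms(4,5) r_U1 by simp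
  next
    case False
    then show ?thesis using that assms(4,5) r(2,3) by simp
  qed
  ultimately show ?thesis unfolding zero_part_iff by blast
qed

lemma completion_without_U1_product:
  assumes "tracked s" "s \<in> cl R" "vanishes_on U (fst s)" "vanishes_on U1 (snd s)"
  shows "\<exists>r\<in>cl F. oplus s r \<in> zero_part (cl R) U"
proof (cases "vanishes_on U (snd s)")
  case True
  then have "oplus s zero_reaction \<in> zero_part (cl R) U"
    using assms(2,3) by (simp add: zero_part_iff)
  then show ?thesis using zero_reaction_in_cl by (rule bexI)
next
  case False
  then obtain v where v: "v \<in> U" "unit_on U (snd s) v" "pending v"
    using assms(1) unfolding tracked_def by blast
  have "v \<notin> U1" using v(1,2) assms(4) by force
  then show ?thesis
    using completion_from_U2[OF _ _ assms(2,3) v(2)] v(1,3) by (simp add: pending_def)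
qed

lemma completion:
  assumes "tracked s" "s \<in> cl R" "vanishes_on U (fst s)"
  shows "\<exists>r\<in>cl F. oplus s r \<in> zero_part (cl R) U"
proof (cases "\<exists>u\<in>U1. unit_on U (snd s) u \<and> pending1 u")
  case True
  then obtain u where u: "u \<in> U1" "unit_on U (snd s) u" "pending1 u" by blast
  obtain q0 q1 where q: "q0 \<in> prod_U R U1" "q1 \<in> cl F1"
    "vanishes_on U1 (fst (oplus q0 q1))" "unit_on U (snd (oplus q0 q1)) u"
    using u(3) unfolding pending1_def by blast
  have "unit_on U1 (snd (oplus q0 q1)) u" using q(4) by (simp del: snd_oplus)
  then obtain r where r: "r \<in> cl F1" "unit_on U1 (fst r) u" "vanishes_on U1 (snd r)"
    by (rule eliminable_completion[OF eliminable1 q(1-3)])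
  have r_F: "r \<in> cl F" using r(1) cl_mono[of F1 F] by blast
  have "oplus s r \<in> cl R" using assms(2) r_F cl_F_subset by (blast intro: cl_oplus)
  moreover have "vanishes_on U (fst (oplus s r))"
    using assms(3) u(1,2) r(2) cl_F1_reactant_U2[OF r(1)] by auto
  moreover have "tracked (oplus s r)" using tracked_oplus_cl[OF r_F assms(1)] calculation(2) .
  moreover have "vanishes_on U1 (snd (oplus s r))" using u(2) r(2,3) by auto
  ultimately obtain r' where "r' \<in> cl F" "oplus (oplus s r) r' \<in> zero_part (cl R) U"
    using completion_without_U1_product by blast
  then show ?thesis using r_F cl_oplus by (metis oplus_assoc)
next
  case False
  have "vanishes_on U1 (snd s)"
  proof
    fix k assume "k \<in> U1"
    show "snd s k = 0"
    proof (cases "vanishes_on U (snd s)")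
      case True
      then show ?thesis using \<open>k \<in> U1\<close> by blast
    next
      case not_vanish: False
      then obtain v where v: "v \<in> U" "unit_on U (snd s) v" "pending v"
        using assms(1) unfolding tracked_def by blast
      then have "v \<notin> U1" using False by (auto simp: pending_def)
      then show ?thesis using v(2) \<open>k \<in> U1\<close> by auto
    qed
  qed
  then show ?thesis using completion_without_U1_product assms by blast
qed

lemma eliminable_union: "eliminable R U F"
  unfolding eliminable_def
proof (intro ballI impI)
  fix r0 r1
  assume r0: "r0 \<in> prod_U R U" and r1: "r1 \<in> cl F" and "oplus r0 r1 \<notin> reac_U (cl R) U"
  have "r0 \<in> cl R" using r0 by (auto simp: prod_U_iff intro: cl_single)
  then have s_R: "oplus r0 r1 \<in> cl R" using r1 cl_F_subset by (blast intro: cl_oplus)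
  then have vanish: "vanishes_on U (fst (oplus r0 r1))"
    using \<open>oplus r0 r1 \<notin> reac_U (cl R) U\<close> unfolding reac_U_iff by (auto simp del: fst_oplus)
  then have "vanishes_on U (fst r0)" by simp
  then have "tracked r0" using r0 by (intro tracked_start)
  then have "tracked (oplus r0 r1)" using tracked_oplus_cl[OF r1] vanish by blast
  then show "\<exists>r2\<in>cl F. oplus (oplus r0 r1) r2 \<in> zero_part (cl R) U"
    using completion s_R vanish by blast
qed

end

theorem proposition4p10:
  fixes R F1 :: "('n::finite) reaction set" and U1 U2 :: "'n set"
  assumes "is_RN R"
    and "non_interacting R (U1 \<union> U2)"
    and "U1 \<inter> U2 = {}"
    and "F1 \<subseteq> reac_U R U1"
    and "eliminable R U1 F1"
    and "eliminable (reduced R U1 F1) U2 (reac_U (reduced R U1 F1) U2)"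
  shows "eliminable R (U1 \<union> U2) (F1 \<union> reac_U R U2)"
proof -
  interpret two_step_elimination R F1 U1 U2
    using assms(2-6) by unfold_locales
  show ?thesis by (rule eliminable_union)
qed

end
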